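(* For every permutation $\pi$ in the domain of $\psi_p$ (respectively $\psi_q$, $\psi_s$), the permutation $\psi_p(\pi)$ (respectively $\psi_q(\pi)$, $\psi_s(\pi)$) has the same number of recoils as $\pi$. For every $\pi$ in the domain of $\psi_r$, $\psi_r(\pi)$ has exactly one more recoil than $\pi$.
   Context: Permutations are in one-line form; $e_n$ is the identity of $S_n$, $e_0$ the empty permutation. Evil-avoiding: avoids $2413,4132,4213,3214$. A recoil of $\pi\in S_n$ is $i\in\{1,\dots,n-1\}$ with $\pi^{-1}_i>\pi^{-1}_{i+1}$. $\rho_{i,j}(\pi)\in S_{n+1}$ ($\pi\in S_n$, $1\le i,j\le n+1$) increases every entry $\ge i$ by $1$ and inserts $i$ at position $j$; $\gamma_{a,b}(\pi)$ ($a>b$) moves the entry at position $a$ to position $b$. $\pi\in S_n$ is $(a,b)$-sandwiched ($a\ge0,b\ge1$) if $(\pi_1,\dots,\pi_a)=(1,\dots,a)$ and $(\pi_{n-b+1},\dots,\pi_n)=(a+1,\dots,a+b)$. Operators: $\psi_p=\rho_{1,1}$ on non-identity evil-avoiding permutations; $\psi_q$ on non-identity evil-avoiding $\pi\in S_n$ with smallest recoil $t$: $\psi_q(\pi)=\gamma_{n-b+2,a+2}(\rho_{t+1,1}(\pi))$ if $\pi$ is $(a,b)$-sandwiched, else $\rho_{t+1,1}(\pi)$; $\psi_r(\pi)=\rho_{1,n+1}(\pi)$ on evil-avoiding $\pi\in S_n$, $n\ge1$; $\psi_s(\pi)=\rho_{\pi_n+1,n+1}(\pi)$ (and $\psi_s(e_0)=[1]$)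 on evil-avoiding $\pi\in S_n$ that are either $e_n$ ($n\ge0$) or satisfy $(\pi_{n-t+1},\dots,\pi_n)=(1,\dots,t)$ for some $t\ge1$. *)

theory Defs
  imports Main "HOL-Library.Sublist"
begin

definition is_perm :: "nat list \<Rightarrow> bool" where
  "is_perm p \<longleftrightarrow> distinct p \<and> set p = {1..length p}"

definition idperm :: "nat \<Rightarrow> nat list" where
  "idperm n = [1..<n+1]"

definition contains_pattern :: "nat list \<Rightarrow> nat list \<Rightarrow> bool" where
  "contains_pattern p sigma \<longleftrightarrow>
     (\<exists>q. subseq q p \<and> length q = length sigma \<and>
        (\<forall>a < length sigma. \<forall>b < length sigma. q ! a < q ! b \<longleftrightarrow> sigma ! a < sigma ! b))"

definition evil_avoiding :: "nat list \<Rightarrow> bool" where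
  "evil_avoiding p \<longleftrightarrow> is_perm p \<and>
     \<not> contains_pattern p [2,4,1,3] \<and> \<not> contains_pattern p [4,1,3,2] \<and>
     \<not> contains_pattern p [4,2,1,3] \<and> \<not> contains_pattern p [3,2,1,4]"

text \<open>Inverse permutation (1-indexed): position of value v.\<close>
definition perm_inv :: "nat list \<Rightarrow> nat \<Rightarrow> nat" where
  "perm_inv p v = Suc (THE j. j < length p \<and> p ! j = v)"

definition recoils :: "nat list \<Rightarrow> nat set" where
  "recoils p = {i. 1 \<le> i \<and> i \<le> length p - 1 \<and> perm_inv p i > perm_inv p (Suc i)}"

definition num_recoils :: "nat list \<Rightarrow> nat" where
  "num_recoils p = card (recoils p)"

text \<open>rho i j: increase entries >= i by one, insert i at (1-indexed) position j.\<close>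
definition rho :: "nat \<Rightarrow> nat \<Rightarrow> nat list \<Rightarrow> nat list" where
  "rho i j p = (let q = map (\<lambda>x. if x \<ge> i then x + 1 else x) p
                in take (j - 1) q @ [i] @ drop (j - 1) q)"

text \<open>gamma a b (a > b): move the entry at (1-indexed) position a to position b.\<close>
definition gamma :: "nat \<Rightarrow> nat \<Rightarrow> nat list \<Rightarrow> nat list" where
  "gamma a b p = take (b - 1) p @ [p ! (a - 1)] @ drop (b - 1) (take (a - 1) p) @ drop a p"

definition sandwiched :: "nat \<Rightarrow> nat \<Rightarrow> nat list \<Rightarrow> bool" where
  "sandwiched a b p \<longleftrightarrow> 1 \<le> b \<and> a \<le> length p \<and> b \<le> length p \<and>
     take a p = [1..<a+1] \<and> drop (length p - b) p = [a+1..<a+b+1]"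

definition psi_p :: "nat list \<Rightarrow> nat list" where
  "psi_p p = rho 1 1 p"

definition psi_q :: "nat list \<Rightarrow> nat list" where
  "psi_q p = (let n = length p; t = Min (recoils p) in
     if (\<exists>a b. sandwiched a b p)
     then (let (a, b) = (SOME ab. sandwiched (fst ab) (snd ab) p)
           in gamma (n - b + 2) (a + 2) (rho (t + 1) 1 p))
     else rho (t + 1) 1 p)"

definition psi_r :: "nat list \<Rightarrow> nat list" where
  "psi_r p = rho 1 (length p + 1) p"

definition psi_s :: "nat list \<Rightarrow> nat list" where
  "psi_s p = (if p = [] then [1] else rho (last p + 1) (length p + 1) p)"

end

(* Only the fact that pi is a permutation is used: neither pattern avoidance nor the side
   conditions on the domains of psi_p and psi_s play a role, and for psi_q only pi <> e_n
   (so that a smallest recoil exists).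

   Inserting a new value i (the map rho_{i,j}) sends every pair of consecutive values k, k+1
   of pi with k <> i-1 to a pair of consecutive values of rho_{i,j}(pi) in the same relative
   order, so the recoils outside {i-1, i} correspond to the recoils of pi other than i-1.
   It only remains to compare the recoil i-1 of pi with the recoils i-1, i of the new
   permutation: psi_p puts 1 in front (no change), psi_r puts 1 at the end (the new recoil 1),
   psi_s trades a recoil at the last entry l of pi for one at l+1, and psi_q puts t+1 in front
   of the recoil t, which stays a recoil.  The additional move gamma in the sandwiched case of
   psi_q carries a+1 only across entries larger than a+2, so it does not change the relative
   order of any two consecutive values. *)

theory Submission
  imports Defs
begin

fun precedes :: "'a \<Rightarrow> 'a \<Rightarrow> 'a list \<Rightarrow> bool" where
  "precedes x y [] \<longleftrightarrow> False"
| "precedes x y (z # zs) \<longleftrightarrow> z = x \<and> y \<in> set zs \<or> precedes x y zs"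

lemma precedes_in_set: "precedes x y xs \<Longrightarrow> x \<in> set xs \<and> y \<in> set xs"
  by (induction xs) auto

lemma precedes_append [simp]:
  "precedes x y (xs @ ys) \<longleftrightarrow> precedes x y xs \<or> precedes x y ys \<or> x \<in> set xs \<and> y \<in> set ys"
  by (induction xs) auto

lemma precedes_insert:
  "x \<noteq> v \<Longrightarrow> y \<noteq> v \<Longrightarrow> precedes x y (as @ v # bs) \<longleftrightarrow> precedes x y (as @ bs)"
  by simp

lemma precedes_map: "inj f \<Longrightarrow> precedes (f x) (f y) (map f xs) \<longleftrightarrow> precedes x y xs"
  by (induction xs) (auto simp: inj_eq image_iff)

lemma precedes_upt [simp]: "precedes x y [a..<b] \<longleftrightarrow> a \<le> x \<and> x < y \<and> y < b"
  by (induction b) auto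

lemma precedes_total:
  "x \<in> set xs \<Longrightarrow> y \<in> set xs \<Longrightarrow> x \<noteq> y \<Longrightarrow> precedes x y xs \<or> precedes y x xs"
  by (induction xs) auto

lemma precedes_move:
  assumes "distinct (as @ ss @ v # bs)" "x = v \<Longrightarrow> y \<notin> set ss" "y = v \<Longrightarrow> x \<notin> set ss"
  shows "precedes x y (as @ v # ss @ bs) \<longleftrightarrow> precedes x y (as @ ss @ v # bs)"
  using assms by (auto dest: precedes_in_set)

lemma perm_inv_nth:
  assumes "distinct xs" "j < length xs"
  shows "perm_inv xs (xs ! j) = Suc j"
  unfolding perm_inv_def using assms by (auto intro!: the_equality simp: nth_eq_iff_index_eq)

lemma perm_inv_Cons:
  assumes "distinct (z # zs)" "v \<in> set (z # zs)"
  shows "perm_inv (z # zs) v = (if v = z then 1 else Suc (perm_inv zs v))"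
proof (cases "v = z")
  case True
  then show ?thesis using perm_inv_nth[OF assms(1), of 0] by simp
next
  case False
  then obtain j where "j < length zs" "zs ! j = v" using assms(2) by (auto simp: in_set_conv_nth)
  then show ?thesis
    using False assms(1) perm_inv_nth[OF assms(1), of "Suc j"] perm_inv_nth[of zs j] by auto
qed

lemma perm_inv_pos [simp]: "0 < perm_inv xs v"
  by (simp add: perm_inv_def)

lemma perm_inv_less_iff_precedes:
  "distinct xs \<Longrightarrow> x \<in> set xs \<Longrightarrow> y \<in> set xs \<Longrightarrow>
    perm_inv xs x < perm_inv xs y \<longleftrightarrow> precedes x y xs"
  by (induction xs) (auto simp: perm_inv_Cons dest: precedes_in_set)

lemma in_recoils_iff_precedes:
  assumes "is_perm p"
  shows "i \<in> recoils p \<longleftrightarrow> precedes (Suc i) i p"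
proof (cases "1 \<le> i \<and> i < length p")
  case True
  then have "i \<in> set p" "Suc i \<in> set p" using assms by (auto simp: is_perm_def)
  then show ?thesis
    using True assms perm_inv_less_iff_precedes by (auto simp: recoils_def is_perm_def)
next
  case False
  then show ?thesis using assms by (auto simp: recoils_def is_perm_def dest: precedes_in_set)
qed

lemma zero_notin_recoils [simp]: "0 \<notin> recoils p"
  by (simp add: recoils_def)

lemma recoils_subset: "recoils p \<subseteq> {1..<length p}"
  by (auto simp: recoils_def)

lemma finite_recoils [simp]: "finite (recoils p)"
  using recoils_subset by (rule finite_subset) simp

lemma recoils_empty_imp_idperm:
  assumes p: "is_perm p" and no_recoils: "recoils p = {}"
  shows "p = idperm (length p)"
proof -
  let ?n = "length p"
  have step: "perm_inv p k < perm_inv p (Suc k)" if "k \<in> {1..<?n}" for k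
  proof -
    have "k \<in> set p" "Suc k \<in> set p" using that p by (auto simp: is_perm_def)
    moreover have "\<not> precedes (Suc k) k p" using no_recoils in_recoils_iff_precedes[OF p] by blast
    ultimately show ?thesis
      using precedes_total perm_inv_less_iff_precedes p by (metis is_perm_def n_not_Suc_n)
  qed
  have "sorted p"
  proof (rule sorted_iff_nth_mono_less[THEN iffD2], intro allI impI)
    fix i j assume ij: "i < j" "j < ?n"
    show "p ! i \<le> p ! j"
    proof (rule ccontr)
      assume "\<not> p ! i \<le> p ! j"
      moreover have "p ! i \<in> {1..?n}" "p ! j \<in> {1..?n}"
        using ij p nth_mem[of i p] nth_mem[of j p] by (auto simp: is_perm_def)
      ultimately have "p ! j < p ! i" "{p ! j..<p ! i} \<subseteq> {1..<?n}" by auto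
      then have "perm_inv p (p ! j) < perm_inv p (p ! i)"
        by (rule lift_Suc_mono_less_ivl[rotated]) (erule step)
      then show False
        using ij p perm_inv_nth[of p i] perm_inv_nth[of p j] by (simp add: is_perm_def)
    qed
  qed
  moreover have "set p = set (idperm ?n)"
    using p by (simp add: is_perm_def idperm_def atLeastLessThanSuc_atLeastAtMost del: upt_Suc)
  ultimately show ?thesis
    using p sorted_distinct_set_unique[of p "idperm ?n"]
    by (simp add: is_perm_def idperm_def del: upt_Suc)
qed

definition shift_from :: "nat \<Rightarrow> nat \<Rightarrow> nat" where
  "shift_from i x = (if i \<le> x then x + 1 else x)"

lemma shift_from_less [simp]: "x < i \<Longrightarrow> shift_from i x = x"
  by (simp add: shift_from_def)

lemma shift_from_ge [simp]: "i \<le> x \<Longrightarrow> shift_from i x = Suc x"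
  by (simp add: shift_from_def)

lemma inj_shift_from: "inj (shift_from i)"
  by (auto simp: inj_on_def shift_from_def split: if_splits)

lemma shift_from_neq [simp]: "shift_from i x \<noteq> i"
  by (simp add: shift_from_def)

lemma notin_shift_from_image [simp]: "i \<notin> shift_from i ` A"
  by (auto simp: shift_from_def)

lemma insert_shift_from_image:
  assumes "1 \<le> i" "i \<le> Suc n"
  shows "insert i (shift_from i ` {1..n}) = {1..Suc n}"
proof -
  have "x \<in> shift_from i ` {1..n}" if "x \<in> {1..Suc n}" "x \<noteq> i" for x
    using that assms
    by (intro image_eqI[of _ _ "if x < i then x else x - 1"]) (auto simp: shift_from_def)
  moreover have "shift_from i ` {1..n} \<subseteq> {1..Suc n}" by (auto simp: shift_from_def)
  ultimately show ?thesis using assms by fastforce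
qed

lemma rho_conv_shift_from:
  "rho i j p = take (j - 1) (map (shift_from i) p) @ i # drop (j - 1) (map (shift_from i) p)"
  by (simp add: rho_def shift_from_def[abs_def] Let_def)

lemma rho_first: "rho i 1 p = i # map (shift_from i) p"
  by (simp add: rho_conv_shift_from)

lemma rho_last: "rho i (length p + 1) p = map (shift_from i) p @ [i]"
  by (simp add: rho_conv_shift_from)

lemma is_perm_rho:
  assumes p: "is_perm p" and i: "1 \<le> i" "i \<le> Suc (length p)"
  shows "is_perm (rho i j p)"
proof -
  let ?M = "map (shift_from i) p"
  have "distinct (as @ i # bs) \<longleftrightarrow> distinct (i # as @ bs)"
    "set (as @ i # bs) = set (i # as @ bs)" "length (as @ i # bs) = length (i # as @ bs)" for as bs
    by auto
  then have "distinct (rho i j p) \<longleftrightarrow> distinct (i # ?M)" "set (rho i j p) = set (i # ?M)"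
    "length (rho i j p) = Suc (length p)"
    unfolding rho_conv_shift_from
    by (simp_all only: append_take_drop_id length_map list.size(4) Suc_eq_plus1)
  moreover have "distinct (i # ?M)"
    using p by (simp add: is_perm_def distinct_map inj_on_subset[OF inj_shift_from])
  moreover have "set (i # ?M) = {1..Suc (length p)}"
    using p insert_shift_from_image[OF i] by (simp add: is_perm_def)
  ultimately show ?thesis by (simp add: is_perm_def rho_conv_shift_from)
qed

lemma precedes_rho:
  "precedes (shift_from i x) (shift_from i y) (rho i j p) \<longleftrightarrow> precedes x y p"
  by (simp only: rho_conv_shift_from precedes_insert shift_from_neq append_take_drop_id
      precedes_map[OF inj_shift_from] not_False_eq_True)

lemma recoils_rho:
  assumes p: "is_perm p" and i: "1 \<le> i" "i \<le> Suc (length p)"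
  shows "recoils (rho i j p) - {i - 1, i} = shift_from i ` (recoils p - {i - 1})"
proof -
  have shift_Suc: "Suc (shift_from i k) = shift_from i (Suc k)" if "k \<noteq> i - 1" for k
    using that i by (auto simp: shift_from_def)
  have recoil_shift: "shift_from i k \<in> recoils (rho i j p) \<longleftrightarrow> k \<in> recoils p"
    if "k \<noteq> i - 1" for k
    using in_recoils_iff_precedes[OF p] in_recoils_iff_precedes[OF is_perm_rho[OF p i]]
      precedes_rho shift_Suc[OF that]
    by simp
  have "m \<in> shift_from i ` (UNIV - {i - 1})" if "m \<notin> {i - 1, i}" for m
    using that i by (intro image_eqI[of _ _ "if m < i then m else m - 1"]) (auto simp: shift_from_def)
  moreover have "shift_from i k \<notin> {i - 1, i}" if "k \<noteq> i - 1" for k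
    using that i by (auto simp: shift_from_def)
  ultimately show ?thesis using recoil_shift by fast
qed

lemma num_recoils_rho:
  assumes "is_perm p" "1 \<le> i" "i \<le> Suc (length p)"
  shows "num_recoils (rho i j p) + card (recoils p \<inter> {i - 1})
    = num_recoils p + card (recoils (rho i j p) \<inter> {i - 1, i})"
proof -
  have "card (recoils (rho i j p) - {i - 1, i}) = card (recoils p - {i - 1})"
    using recoils_rho[OF assms] by (simp add: card_image inj_on_subset[OF inj_shift_from])
  then show ?thesis
    using card_Int_Diff[OF finite_recoils, of p "{i - 1}"]
      card_Int_Diff[OF finite_recoils, of "rho i j p" "{i - 1, i}"]
    by (simp add: num_recoils_def)
qed

lemma num_recoils_psi_p:
  assumes p: "is_perm p"
  shows "num_recoils (psi_p p) = num_recoils p"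
proof -
  have q: "psi_p p = 1 # map (shift_from 1) p" unfolding psi_p_def by (rule rho_first)
  have "is_perm (psi_p p)" using is_perm_rho[OF p] by (simp add: psi_p_def)
  then have "recoils (psi_p p) \<inter> {0, 1} = {}"
    using in_recoils_iff_precedes unfolding q by (auto dest: precedes_in_set)
  then show ?thesis using num_recoils_rho[OF p, of 1 1] by (simp add: psi_p_def)
qed

lemma num_recoils_psi_r:
  assumes p: "is_perm p" and "p \<noteq> []"
  shows "num_recoils (psi_r p) = num_recoils p + 1"
proof -
  have q: "psi_r p = map (shift_from 1) p @ [1]" unfolding psi_r_def by (rule rho_last)
  have "1 \<in> set p" using assms by (auto simp: is_perm_def Suc_le_eq)
  then have "2 \<in> set (map (shift_from 1) p)" by force
  moreover have "is_perm (psi_r p)" using is_perm_rho[OF p] by (simp add: psi_r_def)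
  ultimately have "recoils (psi_r p) \<inter> {0, 1} = {1}"
    using in_recoils_iff_precedes unfolding q by (auto simp: numeral_2_eq_2 dest: precedes_in_set)
  then show ?thesis using num_recoils_rho[OF p, of 1 "length p + 1"] by (simp add: psi_r_def)
qed

lemma num_recoils_psi_s:
  assumes p: "is_perm p"
  shows "num_recoils (psi_s p) = num_recoils p"
proof (cases "p = []")
  case True
  have "recoils [] = {}" "recoils [1] = {}" by (auto simp: recoils_def)
  then show ?thesis using True by (simp add: psi_s_def num_recoils_def)
next
  case False
  define l where "l = last p"
  let ?M = "map (shift_from (Suc l)) p"
  have psi: "psi_s p = rho (Suc l) (length p + 1) p" using False by (simp add: psi_s_def l_def)
  then have q: "psi_s p = ?M @ [Suc l]" by (simp only: rho_last)
  obtain xs where p_snoc: "p = xs @ [l]" using False by (metis append_butlast_last_id l_def)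
  then have "l \<in> set p" by simp
  then have l: "1 \<le> l" "l \<le> length p" using p by (auto simp: is_perm_def)
  have "distinct (xs @ [l])" using p p_snoc by (simp add: is_perm_def)
  then have "precedes (Suc l) l p \<longleftrightarrow> Suc l \<in> set p"
    unfolding p_snoc by (auto dest: precedes_in_set)
  then have recoils_p: "recoils p \<inter> {l} = (if Suc l \<in> set p then {l} else {})"
    using in_recoils_iff_precedes[OF p] by auto
  have "Suc (Suc l) = shift_from (Suc l) (Suc l)" by simp
  then have "Suc (Suc l) \<in> set ?M \<longleftrightarrow> Suc l \<in> set p"
    by (simp only: set_map inj_image_mem_iff[OF inj_shift_from])
  then have "\<not> precedes (Suc l) l (psi_s p)"
    "precedes (Suc (Suc l)) (Suc l) (psi_s p) \<longleftrightarrow> Suc l \<in> set p"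
    unfolding q by (auto dest: precedes_in_set)
  moreover have "is_perm (psi_s p)" using is_perm_rho[OF p] l psi by simp
  ultimately have "recoils (psi_s p) \<inter> {l, Suc l} = (if Suc l \<in> set p then {Suc l} else {})"
    using in_recoils_iff_precedes by auto
  then show ?thesis
    using psi recoils_p num_recoils_rho[OF p, of "Suc l" "length p + 1"] l
    by (simp split: if_splits)
qed

lemma num_recoils_rho_first_Suc_recoil:
  assumes p: "is_perm p" and t: "t \<in> recoils p"
  shows "num_recoils (rho (Suc t) 1 p) = num_recoils p"
proof -
  let ?M = "map (shift_from (Suc t)) p"
  have q: "rho (Suc t) 1 p = Suc t # ?M" by (rule rho_first)
  have "t \<in> {1..<length p}" using t recoils_subset by blast
  then have "t \<in> set p" and t_less: "Suc t \<le> length p" using p by (auto simp: is_perm_def)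
  then have "t \<in> set ?M" by force
  then have "precedes (Suc t) t (rho (Suc t) 1 p)"
    "\<not> precedes (Suc (Suc t)) (Suc t) (rho (Suc t) 1 p)"
    unfolding q by (auto dest: precedes_in_set)
  moreover have "is_perm (rho (Suc t) 1 p)" using is_perm_rho[OF p] t_less by simp
  ultimately have "recoils (rho (Suc t) 1 p) \<inter> {t, Suc t} = {t}"
    using in_recoils_iff_precedes by auto
  then show ?thesis using num_recoils_rho[OF p, of "Suc t" 1] t t_less by simp
qed

lemma gamma_append:
  "gamma (length as + length ss + 1) (length as + 1) (as @ ss @ v # bs) = as @ v # ss @ bs"
  by (simp add: gamma_def nth_append)

lemma recoils_move:
  assumes p: "is_perm (as @ ss @ v # bs)" and "v - 1 \<notin> set ss" "Suc v \<notin> set ss"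
  shows "recoils (as @ v # ss @ bs) = recoils (as @ ss @ v # bs)"
proof -
  have "is_perm (as @ v # ss @ bs)" using p by (auto simp: is_perm_def)
  moreover have
    "precedes (Suc i) i (as @ v # ss @ bs) \<longleftrightarrow> precedes (Suc i) i (as @ ss @ v # bs)" for i
    using p assms(2,3) by (intro precedes_move) (auto simp: is_perm_def)
  ultimately show ?thesis using in_recoils_iff_precedes p by blast
qed

lemma sandwiched_decomp:
  assumes p: "is_perm p" and sw: "sandwiched a b p" and "p \<noteq> idperm (length p)"
  obtains m where "p = [1..<a+1] @ m @ [a+1..<a+b+1]" "set m = {a+b+1..length p}" "m \<noteq> []"
proof -
  let ?n = "length p"
  have b: "1 \<le> b" "b \<le> ?n"
    and pre: "take a p = [1..<a+1]" and suf: "drop (?n - b) p = [a+1..<a+b+1]"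
    using sw by (auto simp: sandwiched_def)
  have "a \<le> ?n - b"
  proof (rule ccontr)
    assume "\<not> a \<le> ?n - b"
    then have "p ! (?n - b) = take a p ! (?n - b)" by simp
    also have "\<dots> = ?n - b + 1" using pre \<open>\<not> a \<le> ?n - b\<close> by (simp del: upt_Suc)
    finally have "p ! (?n - b) \<le> a" using \<open>\<not> a \<le> ?n - b\<close> by simp
    moreover have "p ! (?n - b) = a + 1" using suf b nth_drop[of "?n - b" p 0] by (simp del: upt_Suc)
    ultimately show False by simp
  qed
  define m where "m = drop a (take (?n - b) p)"
  have pm: "p = [1..<a+1] @ m @ [a+1..<a+b+1]"
    using \<open>a \<le> ?n - b\<close> pre suf unfolding m_def
    by (metis append_assoc append_take_drop_id min_absorb1 take_take)
  have dist: "distinct ([1..<a+1] @ m @ [a+1..<a+b+1])" using p pm by (simp add: is_perm_def)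
  have "set ([1..<a+1] @ m @ [a+1..<a+b+1]) = {1..?n}" using p pm by (simp add: is_perm_def)
  then have "set m = {1..?n} - set [1..<a+1] - set [a+1..<a+b+1]"
    using dist by (simp only: set_append distinct_append) blast
  also have "\<dots> = {a+b+1..?n}" by auto
  finally have "set m = {a+b+1..?n}" .
  moreover have "m \<noteq> []"
  proof
    assume "m = []"
    then have "p = [1..<a+b+1]" using pm upt_add_eq_append[of 1 "a+1" b] by (simp del: upt_Suc)
    then show False using assms(3) by (simp add: idperm_def del: upt_Suc)
  qed
  ultimately show ?thesis using that pm by blast
qed

lemma recoils_sandwiched:
  assumes p: "is_perm p" and sw: "sandwiched a b p" and np: "p \<noteq> idperm (length p)"
  shows "a + b \<in> recoils p" "Min (recoils p) = a + b"
proof -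
  obtain m where pm: "p = [1..<a+1] @ m @ [a+1..<a+b+1]"
    and m: "set m = {a+b+1..length p}" "m \<noteq> []"
    using sandwiched_decomp[OF assms] .
  have "1 \<le> b" using sw by (simp add: sandwiched_def)
  have "set m \<noteq> {}" using m(2) by simp
  then have "Suc (a + b) \<in> set m" using m(1) by simp
  then show ab: "a + b \<in> recoils p"
    using in_recoils_iff_precedes[OF p] pm \<open>1 \<le> b\<close> by (auto simp del: upt_Suc)
  have "k \<notin> recoils p" if "k < a + b" for k
    using in_recoils_iff_precedes[OF p] pm m that by (auto simp del: upt_Suc dest: precedes_in_set)
  then show "Min (recoils p) = a + b"
    using ab by (intro Min_eqI) (auto simp: not_less[symmetric])
qed

lemma num_recoils_psi_q_sandwiched:
  assumes p: "is_perm p" and sw: "sandwiched a b p" and np: "p \<noteq> idperm (length p)"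
  shows "num_recoils (gamma (length p - b + 2) (a + 2) (rho (Min (recoils p) + 1) 1 p))
    = num_recoils p"
proof -
  obtain m where pm: "p = [1..<a+1] @ m @ [a+1..<a+b+1]" and m: "set m = {a+b+1..length p}"
    using sandwiched_decomp[OF assms] .
  have "1 \<le> b" using sw by (simp add: sandwiched_def)
  let ?A = "Suc (a + b) # [1..<a+1]" and ?S = "map Suc m" and ?B = "[a+2..<a+b+1]"
  have "map (shift_from (Suc (a + b))) [c..<d] = [c..<d]" if "d \<le> Suc (a + b)" for c d
    using that by (intro map_idI) auto
  moreover have "map (shift_from (Suc (a + b))) m = ?S"
    using m by (intro map_cong) auto
  ultimately have "map (shift_from (Suc (a + b))) p = [1..<a+1] @ ?S @ (a + 1) # ?B"
    using \<open>1 \<le> b\<close> by (subst pm) (simp add: upt_conv_Cons del: upt_Suc)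
  then have q: "rho (Suc (a + b)) 1 p = ?A @ ?S @ (a + 1) # ?B"
    unfolding rho_first by (simp del: upt_Suc)
  have "length p = a + length m + b" using pm by simp
  then have "length p - b + 2 = length ?A + length ?S + 1" "a + 2 = length ?A + 1" by simp_all
  then have g:
    "gamma (length p - b + 2) (a + 2) (?A @ ?S @ (a + 1) # ?B) = ?A @ (a + 1) # ?S @ ?B"
    by (simp only: gamma_append)
  have move: "recoils (?A @ (a + 1) # ?S @ ?B) = recoils (?A @ ?S @ (a + 1) # ?B)"
  proof (rule recoils_move)
    have "Suc (a + b) \<le> length p" using recoils_sandwiched(1)[OF assms] recoils_subset by force
    then show "is_perm (?A @ ?S @ (a + 1) # ?B)"
      unfolding q[symmetric] by (intro is_perm_rho[OF p]) simp_all
    show "a + 1 - 1 \<notin> set ?S" "Suc (a + 1) \<notin> set ?S" using m \<open>1 \<le> b\<close> by auto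
  qed
  have t: "Min (recoils p) + 1 = Suc (a + b)" using recoils_sandwiched(2)[OF assms] by simp
  have "num_recoils (gamma (length p - b + 2) (a + 2) (rho (Min (recoils p) + 1) 1 p))
      = num_recoils (rho (Suc (a + b)) 1 p)"
    unfolding t q g num_recoils_def move ..
  also have "\<dots> = num_recoils p"
    by (rule num_recoils_rho_first_Suc_recoil[OF p recoils_sandwiched(1)[OF assms]])
  finally show ?thesis .
qed

lemma num_recoils_psi_q:
  assumes p: "is_perm p" and np: "p \<noteq> idperm (length p)"
  shows "num_recoils (psi_q p) = num_recoils p"
proof (cases "\<exists>a b. sandwiched a b p")
  case True
  obtain a b where ab: "(SOME ab. sandwiched (fst ab) (snd ab) p) = (a, b)" by fastforce
  have "sandwiched a b p"
    using someI_ex[of "\<lambda>ab. sandwiched (fst ab) (snd ab) p"] True ab by auto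
  moreover have "psi_q p = gamma (length p - b + 2) (a + 2) (rho (Min (recoils p) + 1) 1 p)"
    using True ab by (simp add: psi_q_def Let_def)
  ultimately show ?thesis using num_recoils_psi_q_sandwiched[OF p _ np] by simp
next
  case False
  have "recoils p \<noteq> {}" using recoils_empty_imp_idperm[OF p] np by blast
  then have "Min (recoils p) \<in> recoils p" by simp
  moreover have "psi_q p = rho (Min (recoils p) + 1) 1 p"
    using False by (simp add: psi_q_def Let_def)
  ultimately show ?thesis using num_recoils_rho_first_Suc_recoil[OF p] by simp
qed

theorem proposition5p18:
  shows "(\<forall>p. evil_avoiding p \<and> p \<noteq> idperm (length p) \<longrightarrow>
             num_recoils (psi_p p) = num_recoils p)
       \<and> (\<forall>p. evil_avoiding p \<and> p \<noteq> idperm (length p) \<longrightarrow>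
             num_recoils (psi_q p) = num_recoils p)
       \<and> (\<forall>p. evil_avoiding p \<and>
             (p = idperm (length p) \<or> (\<exists>t\<ge>1. drop (length p - t) p = [1..<t+1])) \<longrightarrow>
             num_recoils (psi_s p) = num_recoils p)
       \<and> (\<forall>p. evil_avoiding p \<and> length p \<ge> 1 \<longrightarrow>
             num_recoils (psi_r p) = num_recoils p + 1)"
proof (intro conjI allI impI; elim conjE)
  fix p
  assume "evil_avoiding p"
  then have p: "is_perm p" by (simp add: evil_avoiding_def)
  show "num_recoils (psi_p p) = num_recoils p" by (rule num_recoils_psi_p[OF p])
  show "num_recoils (psi_s p) = num_recoils p" by (rule num_recoils_psi_s[OF p])
  show "num_recoils (psi_q p) = num_recoils p" if "p \<noteq> idperm (length p)"
    by (rule num_recoils_psi_q[OF p that])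
  show "num_recoils (psi_r p) = num_recoils p + 1" if "length p \<ge> 1"
    using that by (intro num_recoils_psi_r[OF p]) auto
qed

end
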